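(* Let $n\ge 2$, $1\le p<\infty$, $0<s<1$, and fix $N\in[1,\infty)$. Let $\hat U=\{x\in\mathbb{R}^n:\|x\|_N\le 1\}$ and let $U=\tfrac{\ell_U}{2}\hat U+q$ for some $\ell_U>0$ and $q\in\mathbb{R}^n$. For $1\le i<j\le n$ let ${\bf I}_{ij}:\mathbb{R}^n\to\mathbb{R}^n$ be the linear map ${\bf I}_{ij}(x)=I_{ij}x$. Then $$|{\bf I}_{ij}|_{W^{s,p}(U)^n}=\hat C\,\ell_U^{\frac np+1-s},$$ where $\hat C$ is a constant depending on $n,p,s$ (and $N$) but not on $i,j$, $\ell_U$ or $q$.
   Context: $\|x\|_N=(\sum_{k=1}^n|x_k|^N)^{1/N}$. $I_{ij}\in\mathbb{R}^{n\times n}$ is the matrix with $(I_{ij})_{ij}=1$, $(I_{ij})_{ji}=-1$ and all other entries $0$. For a set $E$ and a vector field ${\bf v}$, $|{\bf v}|_{W^{s,p}(E)^n}=\left(\int_E\int_E\frac{|{\bf v}(x)-{\bf v}(y)|^p}{|x-y|^{n+sp}}\,dy\,dx\right)^{1/p}$. *)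

theory Defs
  imports "HOL-Analysis.Analysis"
begin

definition pnormN :: "real \<Rightarrow> real ^ 'n \<Rightarrow> real" where
  "pnormN N x = (\<Sum>k\<in>UNIV. \<bar>x $ k\<bar> powr N) powr (1 / N)"

definition hatU :: "real \<Rightarrow> (real ^ 'n) set" where
  "hatU N = {x. pnormN N x \<le> 1}"

definition cellU :: "real \<Rightarrow> real \<Rightarrow> real ^ 'n \<Rightarrow> (real ^ 'n) set" where
  "cellU N l q = (\<lambda>x. (l / 2) *\<^sub>R x + q) ` hatU N"

definition Imat :: "'n \<Rightarrow> 'n \<Rightarrow> real ^ 'n ^ 'n" where
  "Imat i j = (\<chi> a b. if a = i \<and> b = j then 1 else if a = j \<and> b = i then -1 else 0)"

definition Wsp_seminorm ::
  "real \<Rightarrow> real \<Rightarrow> (real ^ 'n) set \<Rightarrow> (real ^ 'n \<Rightarrow> real ^ 'n) \<Rightarrow> real" where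
  "Wsp_seminorm s p E v =
     (LINT x:E|lborel. LINT y:E|lborel.
        norm (v x - v y) powr p / norm (x - y) powr (real CARD('n) + s * p)) powr (1 / p)"

end

theory Submission
  imports Defs
begin

text \<open>
  For a linear map the Gagliardo integrand depends on \<open>x - y\<close> only. Under
  \<open>x \<mapsto> (l/2) x + q\<close> each of the two Lebesgue measures contributes \<open>(l/2)^n\<close>, and the
  kernel \<open>|I z|^p / |z|^(n+sp)\<close> is homogeneous of degree \<open>p - n - sp\<close>; altogether the
  \<open>p\<close>-th power of the seminorm scales by \<open>(l/2)^(n+p-sp)\<close>. Independence of \<open>i, j\<close>: a
  permutation of coordinates sending \<open>i, j\<close> to a fixed pair preserves Lebesgue measure, the
  Euclidean norm and the \<open>N\<close>-norm (hence the reference cell), and conjugates \<open>I\<^sub>i\<^sub>j\<close>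
  into the matrix of that fixed pair.
\<close>

definition permute_coords :: "('n \<Rightarrow> 'n) \<Rightarrow> real^'n \<Rightarrow> real^'n" where
  "permute_coords \<sigma> x = (\<chi> k. x $ \<sigma> k)"

lemma linear_permute_coords: "linear (permute_coords \<sigma>)"
  unfolding permute_coords_def by (auto intro!: linearI simp: vec_eq_iff)

lemma permute_coords_measurable [measurable]: "permute_coords \<sigma> \<in> borel_measurable borel"
  by (intro borel_measurable_continuous_onI linear_continuous_on
      linear_conv_bounded_linear[THEN iffD1] linear_permute_coords)

lemma permute_coords_diff: "permute_coords \<sigma> x - permute_coords \<sigma> y = permute_coords \<sigma> (x - y)"
  by (simp add: permute_coords_def vec_eq_iff)

lemma permute_coords_inv: "bij \<sigma> \<Longrightarrow> permute_coords \<sigma> (permute_coords (inv \<sigma>) x) = x"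
  by (simp add: permute_coords_def vec_eq_iff bij_is_inj)

lemma norm_permute_coords: "bij \<sigma> \<Longrightarrow> norm (permute_coords \<sigma> x) = norm x"
  unfolding norm_vec_def L2_set_def permute_coords_def
  using sum.reindex_bij_betw[of \<sigma> UNIV UNIV "\<lambda>i. (norm (x $ i))\<^sup>2"] by simp

lemma pnormN_permute_coords: "bij \<sigma> \<Longrightarrow> pnormN N (permute_coords \<sigma> x) = pnormN N x"
  unfolding pnormN_def permute_coords_def
  using sum.reindex_bij_betw[of \<sigma> UNIV UNIV "\<lambda>i. \<bar>x $ i\<bar> powr N"] by simp

lemma prod_Basis_inner_cart: "(\<Prod>b\<in>Basis. (x::real^'n) \<bullet> b) = (\<Prod>i\<in>UNIV. x $ i)"
  by (simp add: Basis_vec_def cart_eq_inner_axis axis_eq_axis prod.UNION_disjoint)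

lemma Basis_inner_le_iff_cart: "(\<forall>b\<in>Basis. (l::real^'n) \<bullet> b \<le> u \<bullet> b) \<longleftrightarrow> (\<forall>i. l $ i \<le> u $ i)"
  by (auto simp add: Basis_vec_def cart_eq_inner_axis)

lemma distr_lborel_permute_coords:
  fixes \<sigma> :: "'n::finite \<Rightarrow> 'n"
  assumes "bij \<sigma>"
  shows "distr lborel borel (permute_coords \<sigma>) = lborel"
proof (rule lborel_eqI[symmetric])
  fix l u :: "real^'n"
  assume "\<And>b. b \<in> Basis \<Longrightarrow> l \<bullet> b \<le> u \<bullet> b"
  then have le: "\<forall>i. l $ i \<le> u $ i"
    using Basis_inner_le_iff_cart by blast
  have "x \<in> permute_coords \<sigma> -` box l u \<longleftrightarrow> (\<forall>i. l $ i < x $ \<sigma> i \<and> x $ \<sigma> i < u $ i)" for x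
    by (simp add: mem_box_cart permute_coords_def)
  also have "\<dots> x \<longleftrightarrow> (\<forall>m. l $ inv \<sigma> m < x $ m \<and> x $ m < u $ inv \<sigma> m)" for x
    by (metis assms bij_inv_eq_iff)
  finally have preimage:
    "permute_coords \<sigma> -` box l u = box (permute_coords (inv \<sigma>) l) (permute_coords (inv \<sigma>) u)"
    by (auto simp: mem_box_cart permute_coords_def)
  have "emeasure (distr lborel borel (permute_coords \<sigma>)) (box l u)
      = (\<Prod>i\<in>UNIV. u $ inv \<sigma> i - l $ inv \<sigma> i)"
    using le by (simp add: emeasure_distr preimage emeasure_lborel_box_eq Basis_inner_le_iff_cart
        prod_Basis_inner_cart permute_coords_def prod_ennreal)
  also have "\<dots> = (\<Prod>i\<in>UNIV. u $ i - l $ i)"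
    using prod.reindex_bij_betw[of "inv \<sigma>" UNIV UNIV "\<lambda>i. u $ i - l $ i"] bij_imp_bij_inv[OF assms]
    by simp
  finally show "emeasure (distr lborel borel (permute_coords \<sigma>)) (box l u)
      = (\<Prod>b\<in>Basis. (u - l) \<bullet> b)"
    by (simp add: prod_Basis_inner_cart)
qed simp

lemma integral_lborel_transform:
  fixes f :: "'a::euclidean_space \<Rightarrow> real" and T S :: "'a \<Rightarrow> 'a"
  assumes T[measurable]: "T \<in> borel_measurable borel" and S[measurable]: "S \<in> borel_measurable borel"
    and TS: "\<And>x. T (S x) = x"
    and lborel_eq: "lborel = density (distr lborel borel T) (\<lambda>_. ennreal c)" and "0 \<le> c"
  shows "integral\<^sup>L lborel f = c * integral\<^sup>L lborel (\<lambda>x. f (T x))"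
proof (cases "f \<in> borel_measurable borel")
  case True
  note [measurable] = True
  have "integral\<^sup>L lborel f = integral\<^sup>L (density (distr lborel borel T) (\<lambda>_. ennreal c)) f"
    by (subst lborel_eq[symmetric]) (rule refl)
  also have "\<dots> = integral\<^sup>L (distr lborel borel T) (\<lambda>x. c * f x)"
    using \<open>0 \<le> c\<close> by (subst integral_density) auto
  also have "\<dots> = integral\<^sup>L lborel (\<lambda>x. c * f (T x))"
    by (subst integral_distr) auto
  finally show ?thesis
    by simp
next
  case False
  have "(\<lambda>x. f (T x)) \<notin> borel_measurable borel"
  proof
    assume "(\<lambda>x. f (T x)) \<in> borel_measurable borel"
    from measurable_compose[OF S this] show False
      using False TS by (simp add: o_def)
  qed
  with False have "\<not> integrable lborel f" "\<not> integrable lborel (\<lambda>x. f (T x))"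
    by (auto dest: borel_measurable_integrable)
  then show ?thesis
    by (simp add: not_integrable_integral_eq)
qed

lemma integral_lborel_permute_coords:
  fixes f :: "real^'n::finite \<Rightarrow> real"
  assumes "bij \<sigma>"
  shows "integral\<^sup>L lborel f = integral\<^sup>L lborel (\<lambda>x. f (permute_coords \<sigma> x))"
  using integral_lborel_transform[of "permute_coords \<sigma>" "permute_coords (inv \<sigma>)" 1 f]
    permute_coords_inv[OF assms] distr_lborel_permute_coords[OF assms]
  by (simp add: density_1)

lemma integral_lborel_affine:
  fixes f :: "'a::euclidean_space \<Rightarrow> real"
  assumes "0 < a"
  shows "integral\<^sup>L lborel f = a ^ DIM('a) * integral\<^sup>L lborel (\<lambda>x. f (a *\<^sub>R x + t))"
proof (rule integral_lborel_transform)
  show "(\<lambda>x. a *\<^sub>R x + t) (inverse a *\<^sub>R (x - t)) = x" for x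
    using assms by simp
  show "lborel = density (distr lborel borel (\<lambda>x. a *\<^sub>R x + t)) (\<lambda>_. ennreal (a ^ DIM('a)))"
    using lborel_affine[of a t] assms by (simp add: add.commute)
qed (use assms in simp_all)

definition difference_kernel_integral :: "(real^'n::finite) set \<Rightarrow> (real^'n \<Rightarrow> real) \<Rightarrow> real" where
  "difference_kernel_integral E g =
     (\<integral>x. indicator E x * (\<integral>y. indicator E y * g (x - y) \<partial>lborel) \<partial>lborel)"

definition gagliardo_kernel :: "real \<Rightarrow> real \<Rightarrow> real^'n^'n \<Rightarrow> real^'n \<Rightarrow> real" where
  "gagliardo_kernel s p A z = norm (A *v z) powr p / norm z powr (real CARD('n) + s * p)"

lemma Wsp_seminorm_matrix:
  "Wsp_seminorm s p E (\<lambda>x. A *v x)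
     = difference_kernel_integral E (gagliardo_kernel s p A) powr (1 / p)"
  unfolding Wsp_seminorm_def difference_kernel_integral_def gagliardo_kernel_def
    set_lebesgue_integral_def
  by (simp add: matrix_vector_mult_diff_distrib)

lemma gagliardo_kernel_scaleR:
  fixes A :: "real^'n^'n"
  assumes "0 < a"
  shows "gagliardo_kernel s p A (a *\<^sub>R z)
       = a powr (p - (real CARD('n) + s * p)) * gagliardo_kernel s p A z"
  using assms by (simp add: gagliardo_kernel_def matrix_vector_mult_scaleR powr_mult powr_diff)

lemma difference_kernel_integral_nonneg:
  "(\<And>z. 0 \<le> g z) \<Longrightarrow> 0 \<le> difference_kernel_integral E g"
  unfolding difference_kernel_integral_def by (auto intro!: integral_nonneg)

lemma difference_kernel_integral_affine_image:
  fixes E :: "(real^'n::finite) set"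
  assumes "0 < a" and homogeneous: "\<And>z. g (a *\<^sub>R z) = k * g z"
  shows "difference_kernel_integral ((\<lambda>x. a *\<^sub>R x + t) ` E) g
       = a ^ CARD('n) * a ^ CARD('n) * k * difference_kernel_integral E g"
proof -
  define T where "T x = a *\<^sub>R x + t" for x :: "real^'n"
  have "inj T"
    using assms(1) by (auto simp: T_def inj_def)
  then have indicator_image: "indicator (T ` E) (T x) = (indicator E x :: real)" for x
    by (simp add: indicator_def inj_image_mem_iff)
  have T_diff: "T x - T y = a *\<^sub>R (x - y)" for x y
    by (simp add: T_def algebra_simps)
  have inner: "(\<integral>y. indicator (T ` E) y * g (T x - y) \<partial>lborel)
      = a ^ CARD('n) * k * (\<integral>y. indicator E y * g (x - y) \<partial>lborel)" for x
    by (subst integral_lborel_affine[OF assms(1), of _ t])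
      (simp add: T_def[symmetric] indicator_image T_diff homogeneous mult.left_commute)
  have "difference_kernel_integral (T ` E) g
      = a ^ CARD('n) * (\<integral>x. indicator (T ` E) (T x) *
          (\<integral>y. indicator (T ` E) y * g (T x - y) \<partial>lborel) \<partial>lborel)"
    unfolding difference_kernel_integral_def T_def
    by (subst integral_lborel_affine[OF assms(1), of _ t]) simp
  also have "\<dots> = a ^ CARD('n) * (\<integral>x. (a ^ CARD('n) * k) *
          (indicator E x * (\<integral>y. indicator E y * g (x - y) \<partial>lborel)) \<partial>lborel)"
    unfolding indicator_image inner by (simp add: ac_simps)
  finally show ?thesis
    by (simp add: difference_kernel_integral_def T_def[abs_def])
qed

lemma Wsp_seminorm_matrix_affine_image:
  fixes E :: "(real^'n::finite) set" and A :: "real^'n^'n"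
  assumes "0 < a" and "0 < p"
  shows "Wsp_seminorm s p ((\<lambda>x. a *\<^sub>R x + t) ` E) (\<lambda>x. A *v x)
       = a powr (real CARD('n) / p + 1 - s) * Wsp_seminorm s p E (\<lambda>x. A *v x)"
proof -
  define n where "n = real CARD('n)"
  define D where "D = difference_kernel_integral E (gagliardo_kernel s p A)"
  define e where "e = n + p - s * p"
  have "0 \<le> D"
    unfolding D_def gagliardo_kernel_def by (rule difference_kernel_integral_nonneg) simp
  have "a ^ CARD('n) = a powr n"
    using assms(1) by (simp add: n_def powr_realpow)
  then have "a ^ CARD('n) * a ^ CARD('n) * a powr (p - (n + s * p))
      = a powr (n + n + (p - (n + s * p)))"
    by (simp only: powr_add)
  also have "n + n + (p - (n + s * p)) = e"
    by (simp add: e_def)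
  finally have "difference_kernel_integral ((\<lambda>x. a *\<^sub>R x + t) ` E) (gagliardo_kernel s p A)
      = a powr e * D"
    using difference_kernel_integral_affine_image[where g = "gagliardo_kernel s p A",
        OF assms(1) gagliardo_kernel_scaleR[OF assms(1)]]
    by (simp add: D_def n_def)
  then have "Wsp_seminorm s p ((\<lambda>x. a *\<^sub>R x + t) ` E) (\<lambda>x. A *v x)
      = a powr (e / p) * D powr (1 / p)"
    using assms(1) \<open>0 \<le> D\<close> by (simp add: Wsp_seminorm_matrix powr_mult powr_powr)
  also have "e / p = n / p + 1 - s"
    using assms(2) by (simp add: e_def field_simps)
  finally show ?thesis
    by (simp add: Wsp_seminorm_matrix D_def n_def)
qed

lemma difference_kernel_integral_permute_coords:
  fixes E :: "(real^'n::finite) set"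
  assumes "bij \<sigma>" and invariant: "\<And>x. permute_coords \<sigma> x \<in> E \<longleftrightarrow> x \<in> E"
    and "\<And>z. g (permute_coords \<sigma> z) = h z"
  shows "difference_kernel_integral E g = difference_kernel_integral E h"
proof -
  have indicator_permute: "indicator E (permute_coords \<sigma> x) = (indicator E x :: real)" for x
    by (simp add: indicator_def invariant)
  have "(\<integral>y. indicator E y * g (permute_coords \<sigma> x - y) \<partial>lborel)
      = (\<integral>y. indicator E y * h (x - y) \<partial>lborel)" for x
    by (subst integral_lborel_permute_coords[OF assms(1)])
      (simp add: indicator_permute permute_coords_diff assms(3))
  then show ?thesis
    unfolding difference_kernel_integral_def
    by (subst integral_lborel_permute_coords[OF assms(1)]) (simp add: indicator_permute)
qed

lemma Imat_permute_coords:
  assumes "bij \<sigma>"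
  shows "Imat i j *v permute_coords \<sigma> z = permute_coords \<sigma> (Imat (\<sigma> i) (\<sigma> j) *v z)"
proof -
  have entry: "Imat i j $ k $ m = Imat (\<sigma> i) (\<sigma> j) $ \<sigma> k $ \<sigma> m" for k m
    using bij_is_inj[OF assms] by (simp add: Imat_def inj_eq)
  have "(\<Sum>m\<in>UNIV. Imat i j $ k $ m * z $ \<sigma> m)
      = (\<Sum>m\<in>UNIV. Imat (\<sigma> i) (\<sigma> j) $ \<sigma> k $ m * z $ m)" for k
    unfolding entry
    using sum.reindex_bij_betw[of \<sigma> UNIV UNIV "\<lambda>m. Imat (\<sigma> i) (\<sigma> j) $ \<sigma> k $ m * z $ m"] assms
    by simp
  then show ?thesis
    by (simp add: vec_eq_iff matrix_vector_mult_def permute_coords_def)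
qed

lemma Wsp_seminorm_Imat_permute_coords:
  fixes E :: "(real^'n::finite) set"
  assumes "bij \<sigma>" and "\<And>x. permute_coords \<sigma> x \<in> E \<longleftrightarrow> x \<in> E"
  shows "Wsp_seminorm s p E (\<lambda>x. Imat i j *v x)
       = Wsp_seminorm s p E (\<lambda>x. Imat (\<sigma> i) (\<sigma> j) *v x)"
proof -
  have kernel: "gagliardo_kernel s p (Imat i j) (permute_coords \<sigma> z)
      = gagliardo_kernel s p (Imat (\<sigma> i) (\<sigma> j)) z" for z
    using assms(1) by (simp add: gagliardo_kernel_def Imat_permute_coords norm_permute_coords)
  from difference_kernel_integral_permute_coords[where g = "gagliardo_kernel s p (Imat i j)",
      OF assms kernel]
  show ?thesis
    by (simp add: Wsp_seminorm_matrix)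
qed

lemma permute_coords_in_hatU_iff: "bij \<sigma> \<Longrightarrow> permute_coords \<sigma> x \<in> hatU N \<longleftrightarrow> x \<in> hatU N"
  by (simp add: hatU_def pnormN_permute_coords)

lemma bij_map_distinct_pair:
  fixes i j i' j' :: 'a
  assumes "i \<noteq> j" and "i' \<noteq> j'"
  obtains \<sigma> where "bij \<sigma>" and "\<sigma> i = i'" and "\<sigma> j = j'"
proof -
  define k where "k = Transposition.transpose i i' j"
  define \<sigma> where "\<sigma> = Transposition.transpose k j' \<circ> Transposition.transpose i i'"
  have "k \<noteq> i'"
    using assms(1) by (auto simp: k_def Transposition.transpose_def)
  then have "\<sigma> i = i'"
    using assms(2) by (auto simp: \<sigma>_def Transposition.transpose_def)
  moreover have "\<sigma> j = j'"
    by (simp add: \<sigma>_def k_def)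
  moreover have "bij \<sigma>"
    by (simp add: \<sigma>_def bij_comp)
  ultimately show ?thesis
    using that by blast
qed

theorem lemma4p2:
  fixes s p N :: real
  assumes "CARD('n::{finite,linorder}) \<ge> 2"
    and "1 \<le> p" and "0 < s" and "s < 1" and "1 \<le> N"
  shows "\<exists>C::real. \<forall>(i::'n::{finite,linorder}) j (l::real) (q::real ^ 'n::{finite,linorder}).
           i < j \<longrightarrow> 0 < l \<longrightarrow>
           Wsp_seminorm s p (cellU N l q) (\<lambda>x. Imat i j *v x)
             = C * l powr (real CARD('n::{finite,linorder}) / p + 1 - s)"
proof -
  \<comment> \<open>Only \<open>p > 0\<close> is needed: where the Gagliardo integral diverges, the scaling argument
    still applies, to the junk value \<open>0\<close> of the Bochner integral.\<close>
  define e where "e = real CARD('n) / p + 1 - s"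
  have "\<not> card (UNIV :: 'n set) \<le> Suc 0"
    using assms(1) by simp
  then obtain i0 j0 :: 'n where "i0 \<noteq> j0"
    using card_le_Suc0_iff_eq[of "UNIV :: 'n set"] by auto
  define C where "C = Wsp_seminorm s p (hatU N) (\<lambda>x. Imat i0 j0 *v x) / 2 powr e"
  have "Wsp_seminorm s p (cellU N l q) (\<lambda>x. Imat i j *v x) = C * l powr e"
    if "i < j" and "0 < l" for i j :: 'n and l q
  proof -
    obtain \<sigma> where \<sigma>: "bij \<sigma>" "\<sigma> i = i0" "\<sigma> j = j0"
      using bij_map_distinct_pair[of i j i0 j0] \<open>i < j\<close> \<open>i0 \<noteq> j0\<close> by blast
    have "Wsp_seminorm s p (cellU N l q) (\<lambda>x. Imat i j *v x)
        = (l / 2) powr e * Wsp_seminorm s p (hatU N) (\<lambda>x. Imat i j *v x)"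
      unfolding cellU_def e_def using \<open>0 < l\<close> assms(2)
      by (intro Wsp_seminorm_matrix_affine_image) simp_all
    also have "Wsp_seminorm s p (hatU N) (\<lambda>x. Imat i j *v x)
        = Wsp_seminorm s p (hatU N) (\<lambda>x. Imat i0 j0 *v x)"
      using Wsp_seminorm_Imat_permute_coords[OF \<sigma>(1) permute_coords_in_hatU_iff[OF \<sigma>(1)],
          where i = i and j = j]
      unfolding \<sigma>(2,3) .
    finally show ?thesis
      using \<open>0 < l\<close> by (simp add: C_def powr_divide)
  qed
  then show ?thesis
    unfolding e_def by blast
qed

end
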